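(* Let $L\ge2$ and let $X=(X_0,\dots,X_{L-1})^T\sim\mathcal{N}(0,\Sigma_X)$ be a centered Gaussian vector with $\mathbb{E}[X_i^2]=1$ for all $i$ and $\mathbb{E}[X_iX_j]<1$ for all $i\neq j$. Let $\hat{R}=\arg\max_{0\le\ell\le L-1}X_\ell$. Then for every $0\le\ell\le L-1$, $\mathbb{E}[X_\ell\,\mathbb{1}_{\{\hat{R}=\ell\}}]>0$. *)

theory Defs
  imports "HOL-Probability.Probability"
begin

definition centered_gaussian_vector ::
  "'a measure \<Rightarrow> nat \<Rightarrow> (nat \<Rightarrow> 'a \<Rightarrow> real) \<Rightarrow> bool" where
  "centered_gaussian_vector M L X \<longleftrightarrow>
     (\<forall>i<L. X i \<in> borel_measurable M) \<and>
     (\<forall>c :: nat \<Rightarrow> real.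
        (AE \<omega> in M. (\<Sum>i<L. c i * X i \<omega>) = 0) \<or>
        (\<exists>\<sigma>>0. distributed M lborel (\<lambda>\<omega>. \<Sum>i<L. c i * X i \<omega>) (normal_density 0 \<sigma>)))"

definition argmax_index :: "nat \<Rightarrow> (nat \<Rightarrow> 'a \<Rightarrow> real) \<Rightarrow> 'a \<Rightarrow> nat" where
  "argmax_index L X \<omega> = (LEAST l. l < L \<and> (\<forall>k<L. X k \<omega> \<le> X l \<omega>))"

end

theory Submission
  imports Defs
begin

text \<open>
  Fix l and regress every X_k on X_l: V_k = X_k - rho_k X_l with rho_k = E[X_k X_l] < 1.
  The residual vector V is uncorrelated with X_l, hence independent of it. Independence is
  proved by showing that conditioning on an event {X_l \<in> B} keeps V Gaussian with the same
  covariance (a characteristic-function computation), and that the law of a Gaussian vector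
  is determined by its covariance (induction on the dimension, splitting off the last
  coordinate by the same regression).

  The X_k are almost surely pairwise distinct, so the argmax is l exactly when
  X_l \<ge> h(V) := max_{k \<noteq> l} V_k / (1 - rho_k). By independence and Fubini,
  E[X_l 1{argmax = l}] = E[phi(h(V))] with phi(z) = E[Z 1{Z \<ge> z}] for a standard normal Z,
  and phi(z) > 0 for every z because Z has mean 0 and a positive density.
\<close>

section \<open>Centered normal laws\<close>

text \<open>For v = 0 this is the point mass at 0, the degenerate case allowed by
  centered_gaussian_vector.\<close>

definition normal_law :: "real \<Rightarrow> real measure" where
  "normal_law v = distr std_normal_distribution borel (\<lambda>x. sqrt v * x)"

lemma real_distribution_normal_law: "real_distribution (normal_law v)"
  unfolding normal_law_def
  by (rule prob_space.real_distribution_distr) (auto simp: prob_space_normal_density)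

lemma char_normal_law:
  assumes "0 \<le> v"
  shows "char (normal_law v) u = complex_of_real (exp (- (v * u\<^sup>2) / 2))"
proof -
  have "char (normal_law v) u = char std_normal_distribution (sqrt v * u)"
    unfolding normal_law_def char_def by (subst integral_distr) (auto simp: mult_ac)
  also have "\<dots> = complex_of_real (exp (- (v * u\<^sup>2) / 2))"
    using assms by (simp add: char_std_normal_distribution power_mult_distrib)
  finally show ?thesis .
qed

lemma normal_law_0: "normal_law 0 = return borel 0"
proof -
  have "normal_law 0 = distr std_normal_distribution borel (\<lambda>x. 0)"
    unfolding normal_law_def by (intro distr_cong) auto
  then show ?thesis by (simp add: prob_space_normal_density prob_space.distr_const)
qed

lemma normal_law_1: "normal_law 1 = std_normal_distribution"
proof -
  have "normal_law 1 = distr std_normal_distribution borel (\<lambda>x. x)"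
    unfolding normal_law_def by (intro distr_cong) auto
  also have "\<dots> = std_normal_distribution" by (rule distr_id2) simp
  finally show ?thesis .
qed

lemma normal_law_eq_density:
  assumes "0 < \<sigma>"
  shows "normal_law (\<sigma>\<^sup>2) = density lborel (normal_density 0 \<sigma>)"
proof -
  interpret prob_space std_normal_distribution by (rule prob_space_normal_density) simp
  have "distributed std_normal_distribution lborel (\<lambda>x. x) (normal_density 0 1)"
    by (auto simp: distributed_def intro!: distr_id2)
  then have "distributed std_normal_distribution lborel (\<lambda>x. 0 + \<sigma> * x)
      (normal_density (0 + \<sigma> * 0) (\<bar>\<sigma>\<bar> * 1))"
    by (rule normal_density_affine) (use assms in auto)
  then have "distr std_normal_distribution lborel (\<lambda>x. \<sigma> * x) = density lborel (normal_density 0 \<sigma>)"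
    using assms by (simp add: distributed_def)
  moreover have "distr std_normal_distribution lborel (\<lambda>x. \<sigma> * x) = normal_law (\<sigma>\<^sup>2)"
    unfolding normal_law_def using assms by (intro distr_cong) auto
  ultimately show ?thesis by simp
qed

lemma normal_law_second_moment:
  assumes "0 \<le> v"
  shows "integrable (normal_law v) (\<lambda>x. x\<^sup>2)" "(\<integral>x. x\<^sup>2 \<partial>normal_law v) = v"
proof -
  have "(\<integral>x. x^2 \<partial>std_normal_distribution) = 1"
    using std_normal_distribution_even_moments(1)[of 1] by simp
  then show "(\<integral>x. x\<^sup>2 \<partial>normal_law v) = v"
    unfolding normal_law_def using assms by (subst integral_distr) (auto simp: power_mult_distrib)
  show "integrable (normal_law v) (\<lambda>x. x\<^sup>2)"
    unfolding normal_law_def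
    by (subst integrable_distr_eq)
       (auto simp: power_mult_distrib intro: integrable_std_normal_distribution_moment)
qed

lemma AE_normal_law_neq_0:
  assumes "0 < v"
  shows "AE x in normal_law v. x \<noteq> 0"
proof -
  have eq: "normal_law v = density lborel (normal_density 0 (sqrt v))"
    using normal_law_eq_density[of "sqrt v"] assms by simp
  show ?thesis
    unfolding eq
    by (subst AE_density) (auto intro: eventually_mono[OF AE_lborel_singleton[of 0]])
qed

lemma integral_std_normal_pos:
  fixes f :: "real \<Rightarrow> real"
  assumes [measurable]: "f \<in> borel_measurable borel"
    and f: "integrable std_normal_distribution f" "\<And>x. 0 \<le> f x"
    and pos: "\<And>x. c < x \<Longrightarrow> x < c + 1 \<Longrightarrow> 0 < f x"
  shows "0 < (\<integral>x. f x \<partial>std_normal_distribution)"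
proof -
  have "(\<integral>x. f x \<partial>std_normal_distribution) \<noteq> 0"
  proof
    assume "(\<integral>x. f x \<partial>std_normal_distribution) = 0"
    then have "AE x in std_normal_distribution. f x = 0"
      using integral_nonneg_eq_0_iff_AE f by auto
    then have "AE x in lborel. 0 < std_normal_density x \<longrightarrow> f x = 0"
      by (subst (asm) AE_density) auto
    then have "AE x in lborel. x \<notin> {c<..<c+1}"
      by eventually_elim (use pos normal_density_pos[of 1 0] in force)
    then have "emeasure lborel {c<..<c+1} = 0"
      by (subst (asm) AE_iff_measurable[of "{c<..<c+1}"]) auto
    then show False by simp
  qed
  moreover have "0 \<le> (\<integral>x. f x \<partial>std_normal_distribution)"
    using f by (intro integral_nonneg_AE) auto
  ultimately show ?thesis by simp
qed

lemma std_normal_truncated_mean_pos: "0 < (\<integral>x. x * indicator {z..} x \<partial>std_normal_distribution)"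
proof -
  have int_id: "integrable std_normal_distribution (\<lambda>x. x)"
    using integrable_std_normal_distribution_moment[of 1] by simp
  have mean: "(\<integral>x. x \<partial>std_normal_distribution) = 0"
    using integral_std_normal_distribution_moment_odd[of 1] by simp
  have int: "integrable std_normal_distribution (\<lambda>x. x * indicator S x)" if [measurable]: "S \<in> sets borel" for S
    by (rule Bochner_Integration.integrable_bound[OF int_id]) (auto simp: indicator_def)
  show ?thesis
  proof (cases "0 \<le> z")
    case True
    show ?thesis
      by (rule integral_std_normal_pos[where c="z + 1"])
         (use True int[of "{z..}"] in \<open>auto simp: indicator_def\<close>)
  next
    case False
    \<comment> \<open>As the mean is 0, the integral over {z..} is minus the one over {..<z}, where x < 0.\<close>
    have "0 < (\<integral>x. - (x * indicator {..<z} x) \<partial>std_normal_distribution)"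
      by (rule integral_std_normal_pos[where c="z - 2"])
         (use False int[of "{..<z}"] in \<open>auto simp: indicator_def mult_le_0_iff\<close>)
    moreover have "(\<lambda>x. x * indicator {z..} x) = (\<lambda>x. x - x * indicator {..<z} x :: real)"
      by (auto simp: indicator_def fun_eq_iff)
    ultimately show ?thesis
      using mean int_id int[of "{..<z}"] by simp
  qed
qed

section \<open>Gaussian vectors and linear regression\<close>

definition lin_comb :: "nat \<Rightarrow> (nat \<Rightarrow> real) \<Rightarrow> (nat \<Rightarrow> 'a \<Rightarrow> real) \<Rightarrow> 'a \<Rightarrow> real" where
  "lin_comb n c Z \<omega> = (\<Sum>i<n. c i * Z i \<omega>)"

definition unit_coeff :: "nat \<Rightarrow> nat \<Rightarrow> real" where
  "unit_coeff k i = (if i = k then 1 else 0)"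

lemma lin_comb_measurable [measurable]:
  "(\<And>i. i < n \<Longrightarrow> Z i \<in> borel_measurable M) \<Longrightarrow> lin_comb n c Z \<in> borel_measurable M"
  unfolding lin_comb_def by (intro borel_measurable_sum borel_measurable_times) auto

lemma lin_comb_add: "lin_comb n (\<lambda>i. a i + b i) Z \<omega> = lin_comb n a Z \<omega> + lin_comb n b Z \<omega>"
  unfolding lin_comb_def by (simp add: distrib_right sum.distrib)

lemma lin_comb_diff: "lin_comb n (\<lambda>i. a i - b i) Z \<omega> = lin_comb n a Z \<omega> - lin_comb n b Z \<omega>"
  unfolding lin_comb_def by (simp add: left_diff_distrib sum_subtractf)

lemma lin_comb_scale: "lin_comb n (\<lambda>i. s * c i) Z \<omega> = s * lin_comb n c Z \<omega>"
  unfolding lin_comb_def by (simp add: sum_distrib_left mult_ac)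

lemma lin_comb_unit_coeff: "k < n \<Longrightarrow> lin_comb n (unit_coeff k) Z \<omega> = Z k \<omega>"
  unfolding lin_comb_def unit_coeff_def by (simp add: mult_delta_left)

lemma lin_comb_zero_extend:
  assumes "m \<le> n"
  shows "lin_comb n (\<lambda>i. if i < m then c i else 0) Z \<omega> = lin_comb m c Z \<omega>"
proof -
  have "{..<n} \<inter> {i. i < m} = {..<m}" using assms by auto
  then show ?thesis
    unfolding lin_comb_def by (simp add: if_distrib[of "\<lambda>x. x * _"] sum.If_cases)
qed

definition gaussian_vector ::
  "'a measure \<Rightarrow> nat \<Rightarrow> (nat \<Rightarrow> 'a \<Rightarrow> real) \<Rightarrow> ((nat \<Rightarrow> real) \<Rightarrow> real) \<Rightarrow> bool" where
  "gaussian_vector M n Z v \<longleftrightarrow> prob_space M \<and> (\<forall>i<n. Z i \<in> borel_measurable M) \<and>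
     (\<forall>c. 0 \<le> v c \<and> distr M borel (lin_comb n c Z) = normal_law (v c))"

lemma gaussian_vectorD:
  assumes "gaussian_vector M n Z v"
  shows "prob_space M" "i < n \<Longrightarrow> Z i \<in> borel_measurable M" "0 \<le> v c"
    "distr M borel (lin_comb n c Z) = normal_law (v c)"
  using assms unfolding gaussian_vector_def by auto

lemma gaussian_vector_component_law:
  assumes "gaussian_vector M n Z v" "k < n"
  shows "distr M borel (Z k) = normal_law (v (unit_coeff k))"
proof -
  have "distr M borel (Z k) = distr M borel (lin_comb n (unit_coeff k) Z)"
    using assms by (intro distr_cong) (auto simp: lin_comb_unit_coeff)
  then show ?thesis using gaussian_vectorD(4)[OF assms(1)] by simp
qed

lemma gaussian_vector_square:
  assumes "gaussian_vector M n Z v"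
  shows "integrable M (\<lambda>\<omega>. (lin_comb n c Z \<omega>)\<^sup>2)" "(\<integral>\<omega>. (lin_comb n c Z \<omega>)\<^sup>2 \<partial>M) = v c"
proof -
  note G = gaussian_vectorD[OF assms]
  have meas: "lin_comb n c Z \<in> borel_measurable M"
    using G(2) by (rule lin_comb_measurable)
  show "integrable M (\<lambda>\<omega>. (lin_comb n c Z \<omega>)\<^sup>2)"
    using normal_law_second_moment(1)[OF G(3)] G(4) integrable_distr_eq[OF meas, of "\<lambda>x. x\<^sup>2"]
    by simp
  show "(\<integral>\<omega>. (lin_comb n c Z \<omega>)\<^sup>2 \<partial>M) = v c"
    using normal_law_second_moment(2)[OF G(3)] G(4) integral_distr[OF meas, of "\<lambda>x. x\<^sup>2"]
    by simp
qed

lemma gaussian_vector_scale: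
  assumes "gaussian_vector M n Z v"
  shows "v (\<lambda>i. s * c i) = s\<^sup>2 * v c"
  using gaussian_vector_square(2)[OF assms, of "\<lambda>i. s * c i"] gaussian_vector_square(2)[OF assms, of c]
  by (simp add: lin_comb_scale power_mult_distrib)

lemma gaussian_vector_product:
  assumes "gaussian_vector M n Z v"
  shows "integrable M (\<lambda>\<omega>. lin_comb n a Z \<omega> * lin_comb n b Z \<omega>)"
    "(\<integral>\<omega>. lin_comb n a Z \<omega> * lin_comb n b Z \<omega> \<partial>M) = (v (\<lambda>i. a i + b i) - v a - v b) / 2"
proof -
  have eq: "lin_comb n a Z \<omega> * lin_comb n b Z \<omega> =
      ((lin_comb n (\<lambda>i. a i + b i) Z \<omega>)\<^sup>2 - (lin_comb n a Z \<omega>)\<^sup>2 - (lin_comb n b Z \<omega>)\<^sup>2) / 2" for \<omega>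
    by (simp add: lin_comb_add power2_eq_square algebra_simps)
  note sq = gaussian_vector_square[OF assms]
  show "integrable M (\<lambda>\<omega>. lin_comb n a Z \<omega> * lin_comb n b Z \<omega>)"
    unfolding eq by (intro integrable_divide Bochner_Integration.integrable_diff sq(1))
  show "(\<integral>\<omega>. lin_comb n a Z \<omega> * lin_comb n b Z \<omega> \<partial>M) = (v (\<lambda>i. a i + b i) - v a - v b) / 2"
    unfolding eq by (simp add: sq)
qed

definition covar :: "((nat \<Rightarrow> real) \<Rightarrow> real) \<Rightarrow> nat \<Rightarrow> nat \<Rightarrow> real" where
  "covar v k j = (v (\<lambda>i. unit_coeff k i + unit_coeff j i) - v (unit_coeff k) - v (unit_coeff j)) / 2"

lemma gaussian_vector_covar:
  assumes "gaussian_vector M n Z v" "k < n" "j < n"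
  shows "integrable M (\<lambda>\<omega>. Z k \<omega> * Z j \<omega>)" "(\<integral>\<omega>. Z k \<omega> * Z j \<omega> \<partial>M) = covar v k j"
  using gaussian_vector_product[OF assms(1), of "unit_coeff k" "unit_coeff j"] assms(2,3)
  by (simp_all add: lin_comb_unit_coeff covar_def)

lemma gaussian_vector_var:
  assumes "gaussian_vector M n Z v" "k < n"
  shows "(\<integral>\<omega>. (Z k \<omega>)\<^sup>2 \<partial>M) = v (unit_coeff k)"
  using gaussian_vector_square(2)[OF assms(1), of "unit_coeff k"] assms(2)
  by (simp add: lin_comb_unit_coeff)

lemma covar_eq_0_if_var_eq_0:
  assumes G: "gaussian_vector M n Z v" and "k < n" "j < n" and "v (unit_coeff j) = 0"
  shows "covar v k j = 0"
proof -
  have "integrable M (\<lambda>\<omega>. (Z j \<omega>)\<^sup>2)"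
    using gaussian_vector_square(1)[OF G, of "unit_coeff j"] assms by (simp add: lin_comb_unit_coeff)
  then have "AE \<omega> in M. (Z j \<omega>)\<^sup>2 = 0"
    using gaussian_vector_var[OF G, of j] assms by (subst integral_nonneg_eq_0_iff_AE[symmetric]) auto
  then have "AE \<omega> in M. Z k \<omega> * Z j \<omega> = 0"
    by eventually_elim simp
  then have "(\<integral>\<omega>. Z k \<omega> * Z j \<omega> \<partial>M) = (\<integral>\<omega>. 0 \<partial>M)"
    using assms gaussian_vectorD(2)[OF G] by (intro integral_cong_AE) auto
  then show ?thesis
    using gaussian_vector_covar[OF G] assms by simp
qed

lemma AE_gaussian_vector_components_neq:
  assumes G: "gaussian_vector M n Z v" and "k < n" "j < n"
    and "2 * covar v k j < v (unit_coeff k) + v (unit_coeff j)"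
  shows "AE \<omega> in M. Z k \<omega> \<noteq> Z j \<omega>"
proof -
  note [measurable] = gaussian_vectorD(2)[OF G]
  define d where "d = (\<lambda>i. unit_coeff k i - unit_coeff j i)"
  have diff: "lin_comb n d Z \<omega> = Z k \<omega> - Z j \<omega>" for \<omega>
    unfolding d_def using assms by (simp add: lin_comb_diff lin_comb_unit_coeff)
  have sq: "integrable M (\<lambda>\<omega>. (Z i \<omega>)\<^sup>2)" if "i < n" for i
    using gaussian_vector_square(1)[OF G, of "unit_coeff i"] that by (simp add: lin_comb_unit_coeff)
  have "v d = (\<integral>\<omega>. (Z k \<omega>)\<^sup>2 + (Z j \<omega>)\<^sup>2 - 2 * (Z k \<omega> * Z j \<omega>) \<partial>M)"
    using gaussian_vector_square(2)[OF G, of d] unfolding diff power2_diff by (simp only: mult.assoc)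
  also have "\<dots> = (\<integral>\<omega>. (Z k \<omega>)\<^sup>2 \<partial>M) + (\<integral>\<omega>. (Z j \<omega>)\<^sup>2 \<partial>M) - 2 * (\<integral>\<omega>. Z k \<omega> * Z j \<omega> \<partial>M)"
    using sq[OF \<open>k < n\<close>] sq[OF \<open>j < n\<close>] gaussian_vector_covar(1)[OF G \<open>k < n\<close> \<open>j < n\<close>] by simp
  also have "\<dots> = v (unit_coeff k) + v (unit_coeff j) - 2 * covar v k j"
    using assms by (simp add: gaussian_vector_covar(2)[OF G] gaussian_vector_var[OF G])
  finally have "0 < v d"
    using assms(4) by simp
  have "distr M borel (\<lambda>\<omega>. Z k \<omega> - Z j \<omega>) = normal_law (v d)"
    using gaussian_vectorD(4)[OF G, of d] by (simp add: diff[abs_def])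
  then have "AE x in distr M borel (\<lambda>\<omega>. Z k \<omega> - Z j \<omega>). x \<noteq> 0"
    using AE_normal_law_neq_0[OF \<open>0 < v d\<close>] by (simp only:)
  then show ?thesis
    using assms by (subst (asm) AE_distr_iff) auto
qed

lemma gaussian_vector_restrict:
  assumes "gaussian_vector M n Z v" "m \<le> n"
  shows "gaussian_vector M m Z (\<lambda>c. v (\<lambda>i. if i < m then c i else 0))"
proof -
  note G = gaussian_vectorD[OF assms(1)]
  have "lin_comb m c Z = lin_comb n (\<lambda>i. if i < m then c i else 0) Z" for c
    using assms(2) by (simp add: fun_eq_iff lin_comb_zero_extend)
  then show ?thesis
    using G(1,2,3) G(4)[of "\<lambda>i. if i < _ then _ i else 0"] assms(2)
    unfolding gaussian_vector_def by auto
qed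

lemma centered_gaussian_vector_imp_gaussian_vector:
  assumes "prob_space M" "centered_gaussian_vector M n Z"
  shows "gaussian_vector M n Z (\<lambda>c. \<integral>\<omega>. (lin_comb n c Z \<omega>)\<^sup>2 \<partial>M)"
proof -
  interpret prob_space M by fact
  have [measurable]: "\<And>i. i < n \<Longrightarrow> Z i \<in> borel_measurable M"
    using assms(2) unfolding centered_gaussian_vector_def by auto
  have "distr M borel (lin_comb n c Z) = normal_law (\<integral>\<omega>. (lin_comb n c Z \<omega>)\<^sup>2 \<partial>M)" for c
  proof -
    from assms(2) consider "AE \<omega> in M. lin_comb n c Z \<omega> = 0"
      | \<sigma> where "\<sigma> > 0" "distributed M lborel (lin_comb n c Z) (normal_density 0 \<sigma>)"
      unfolding centered_gaussian_vector_def lin_comb_def[abs_def] by blast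
    then show ?thesis
    proof cases
      case 1
      then have "(\<integral>\<omega>. (lin_comb n c Z \<omega>)\<^sup>2 \<partial>M) = 0"
        by (simp add: integral_cong_AE[where g="\<lambda>_. 0"])
      moreover have "distr M borel (lin_comb n c Z) = distr M borel (\<lambda>_. 0)"
        using 1 by (intro distr_cong_AE) auto
      ultimately show ?thesis by (simp add: normal_law_0 distr_const)
    next
      case (2 \<sigma>)
      have "distr M borel (lin_comb n c Z) = distr M lborel (lin_comb n c Z)"
        by (intro distr_cong) auto
      also have "\<dots> = normal_law (\<sigma>\<^sup>2)"
        using 2 by (simp add: distributed_def normal_law_eq_density)
      finally have law: "distr M borel (lin_comb n c Z) = normal_law (\<sigma>\<^sup>2)" .
      have "(\<integral>\<omega>. (lin_comb n c Z \<omega>)\<^sup>2 \<partial>M) = (\<integral>x. x\<^sup>2 \<partial>distr M borel (lin_comb n c Z))"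
        by (subst integral_distr) auto
      also have "\<dots> = \<sigma>\<^sup>2"
        unfolding law by (rule normal_law_second_moment(2)) simp
      finally show ?thesis using law by simp
    qed
  qed
  then show ?thesis
    unfolding gaussian_vector_def using assms(1) by auto
qed

text \<open>If Z_j has variance 0, the coefficient is 0 by division by zero; then Z_j = 0 a.s.,
  so the residuals are still uncorrelated with Z_j.\<close>

definition regression_coeff :: "((nat \<Rightarrow> real) \<Rightarrow> real) \<Rightarrow> nat \<Rightarrow> nat \<Rightarrow> real" where
  "regression_coeff v j k = covar v k j / v (unit_coeff j)"

definition residual :: "((nat \<Rightarrow> real) \<Rightarrow> real) \<Rightarrow> nat \<Rightarrow> (nat \<Rightarrow> 'a \<Rightarrow> real) \<Rightarrow> nat \<Rightarrow> 'a \<Rightarrow> real" where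
  "residual v j Z k \<omega> = Z k \<omega> - regression_coeff v j k * Z j \<omega>"

definition residual_coeffs :: "nat \<Rightarrow> ((nat \<Rightarrow> real) \<Rightarrow> real) \<Rightarrow> nat \<Rightarrow> (nat \<Rightarrow> real) \<Rightarrow> nat \<Rightarrow> real" where
  "residual_coeffs n v j c i = c i - (if i = j then \<Sum>k<n. c k * regression_coeff v j k else 0)"

lemma residual_measurable:
  assumes "\<And>i. i < n \<Longrightarrow> Z i \<in> borel_measurable M" "j < n" "k < n"
  shows "residual v j Z k \<in> borel_measurable M"
  unfolding residual_def[abs_def] using assms by measurable

lemma lin_comb_residual:
  assumes "j < n"
  shows "lin_comb n c (residual v j Z) \<omega> = lin_comb n (residual_coeffs n v j c) Z \<omega>"
proof -
  have "lin_comb n (residual_coeffs n v j c) Z \<omega> =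
      lin_comb n c Z \<omega> - (\<Sum>k<n. c k * regression_coeff v j k) * Z j \<omega>"
    unfolding lin_comb_def residual_coeffs_def using assms
    by (simp add: left_diff_distrib sum_subtractf if_distrib[of "\<lambda>x. x * _"] cong: if_cong)
  also have "\<dots> = lin_comb n c (residual v j Z) \<omega>"
    unfolding lin_comb_def residual_def
    by (simp add: right_diff_distrib sum_subtractf sum_distrib_left sum_distrib_right mult_ac)
  finally show ?thesis by simp
qed

lemma residual_uncorrelated:
  assumes G: "gaussian_vector M n Z v" and "j < n" "k < n"
  shows "integrable M (\<lambda>\<omega>. residual v j Z k \<omega> * Z j \<omega>)"
    "(\<integral>\<omega>. residual v j Z k \<omega> * Z j \<omega> \<partial>M) = 0"
proof -
  have eq: "residual v j Z k \<omega> * Z j \<omega> = Z k \<omega> * Z j \<omega> - regression_coeff v j k * (Z j \<omega> * Z j \<omega>)" for \<omega>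
    unfolding residual_def by (simp add: algebra_simps)
  note cov = gaussian_vector_covar[OF G]
  show "integrable M (\<lambda>\<omega>. residual v j Z k \<omega> * Z j \<omega>)"
    unfolding eq using cov(1) assms by auto
  have "covar v k j = regression_coeff v j k * covar v j j"
  proof (cases "v (unit_coeff j) = 0")
    case True
    then show ?thesis using covar_eq_0_if_var_eq_0[OF G] assms by simp
  next
    case False
    have "covar v j j = v (unit_coeff j)"
      using cov(2)[of j j] gaussian_vector_var[OF G, of j] assms by (simp add: power2_eq_square)
    then show ?thesis using False by (simp add: regression_coeff_def)
  qed
  then show "(\<integral>\<omega>. residual v j Z k \<omega> * Z j \<omega> \<partial>M) = 0"
    unfolding eq using cov assms by simp
qed

lemma gaussian_vector_residual:
  assumes G: "gaussian_vector M n Z v" and j: "j < n"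
  shows "gaussian_vector M n (residual v j Z) (\<lambda>c. v (residual_coeffs n v j c))"
    and "distr M borel (\<lambda>\<omega>. t * Z j \<omega> + lin_comb n c (residual v j Z) \<omega>) =
      normal_law (t\<^sup>2 * v (unit_coeff j) + v (residual_coeffs n v j c))"
proof -
  note G' = gaussian_vectorD[OF G]
  have "lin_comb n c (residual v j Z) = lin_comb n (residual_coeffs n v j c) Z" for c
    using j by (simp add: fun_eq_iff lin_comb_residual)
  then show "gaussian_vector M n (residual v j Z) (\<lambda>c. v (residual_coeffs n v j c))"
    using G' j by (auto simp: gaussian_vector_def intro: residual_measurable)
  have "(\<integral>\<omega>. lin_comb n (residual_coeffs n v j c) Z \<omega> * lin_comb n (\<lambda>i. t * unit_coeff j i) Z \<omega> \<partial>M) =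
      (\<integral>\<omega>. (\<Sum>k<n. t * c k * (residual v j Z k \<omega> * Z j \<omega>)) \<partial>M)"
    using j by (simp add: lin_comb_residual[symmetric] lin_comb_scale lin_comb_unit_coeff)
      (simp add: lin_comb_def sum_distrib_left mult_ac)
  also have "\<dots> = 0"
    using residual_uncorrelated[OF G j] by (subst Bochner_Integration.integral_sum) auto
  finally have "v (\<lambda>i. residual_coeffs n v j c i + t * unit_coeff j i) =
      v (residual_coeffs n v j c) + v (\<lambda>i. t * unit_coeff j i)"
    using gaussian_vector_product(2)[OF G] by simp
  moreover have "(\<lambda>\<omega>. t * Z j \<omega> + lin_comb n c (residual v j Z) \<omega>) =
      lin_comb n (\<lambda>i. residual_coeffs n v j c i + t * unit_coeff j i) Z"
    using j by (simp add: fun_eq_iff lin_comb_add lin_comb_scale lin_comb_residual lin_comb_unit_coeff)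
  ultimately show "distr M borel (\<lambda>\<omega>. t * Z j \<omega> + lin_comb n c (residual v j Z) \<omega>) =
      normal_law (t\<^sup>2 * v (unit_coeff j) + v (residual_coeffs n v j c))"
    using G'(4) gaussian_vector_scale[OF G] by (simp add: add.commute)
qed

section \<open>Reweighting and characteristic functions\<close>

lemma prob_space_density_integral_eq_1:
  assumes "prob_space M" and [measurable]: "g \<in> borel_measurable M"
    and "\<And>\<omega>. 0 \<le> g \<omega>" "integrable M g" "(\<integral>\<omega>. g \<omega> \<partial>M) = 1"
  shows "prob_space (density M g)"
proof
  have "emeasure (density M g) (space (density M g)) = (\<integral>\<^sup>+\<omega>. ennreal (g \<omega>) \<partial>M)"
    by (subst emeasure_density) (auto intro!: nn_integral_cong split: split_indicator)
  also have "\<dots> = ennreal (\<integral>\<omega>. g \<omega> \<partial>M)"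
    using assms by (intro nn_integral_eq_integral) auto
  finally show "emeasure (density M g) (space (density M g)) = 1"
    using assms by simp
qed

lemma char_distr_density:
  fixes g U :: "'a \<Rightarrow> real"
  assumes [measurable]: "g \<in> borel_measurable M" "U \<in> borel_measurable M" and "\<And>\<omega>. 0 \<le> g \<omega>"
  shows "char (distr (density M g) borel U) u = (CLINT \<omega>|M. complex_of_real (g \<omega>) * iexp (u * U \<omega>))"
proof -
  have "char (distr (density M g) borel U) u = (CLINT \<omega>|density M g. iexp (u * U \<omega>))"
    unfolding char_def by (subst integral_distr) auto
  also have "\<dots> = (CLINT \<omega>|M. g \<omega> *\<^sub>R iexp (u * U \<omega>))"
    using assms by (subst integral_density) auto
  finally show ?thesis
    by (simp add: scaleR_conv_of_real)
qed

lemma integral_weight_indicator: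
  fixes W g :: "'a \<Rightarrow> real"
  assumes "prob_space M" and [measurable]: "W \<in> borel_measurable M" "g \<in> borel_measurable M"
    and g: "integrable M g" "\<And>\<omega>. 0 \<le> g \<omega>" and m: "0 < m"
    and char_eq: "\<And>t. (CLINT \<omega>|M. complex_of_real (g \<omega>) * iexp (t * W \<omega>)) =
      complex_of_real m * char (distr M borel W) t"
    and [measurable]: "B \<in> sets borel"
  shows "(\<integral>\<omega>. g \<omega> * indicator B (W \<omega>) \<partial>M) = m * (\<integral>\<omega>. indicator B (W \<omega>) \<partial>M)"
proof -
  interpret prob_space M by fact
  interpret W: real_distribution "distr M borel W" by simp
  have "complex_of_real (\<integral>\<omega>. g \<omega> \<partial>M) = complex_of_real m"
    using char_eq[of 0] W.char_zero by simp
  then have "(\<integral>\<omega>. g \<omega> / m \<partial>M) = 1"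
    using m by simp
  then have Q: "prob_space (density M (\<lambda>\<omega>. g \<omega> / m))"
    using g m by (intro prob_space_density_integral_eq_1 prob_space_axioms) auto
  \<comment> \<open>Under the reweighted measure, W has the same characteristic function, hence the same law.\<close>
  have "char (distr (density M (\<lambda>\<omega>. g \<omega> / m)) borel W) t = char (distr M borel W) t" for t
  proof -
    have "char (distr (density M (\<lambda>\<omega>. g \<omega> / m)) borel W) t =
        (CLINT \<omega>|M. complex_of_real (g \<omega>) * iexp (t * W \<omega>) / complex_of_real m)"
      using g m by (subst char_distr_density) auto
    then show ?thesis
      using char_eq[of t] m by simp
  qed
  then have law: "distr (density M (\<lambda>\<omega>. g \<omega> / m)) borel W = distr M borel W"
    using Q by (intro Levy_uniqueness prob_space.real_distribution_distr prob_space_axioms) auto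
  have "(\<integral>\<omega>. g \<omega> * indicator B (W \<omega>) \<partial>M) / m = (\<integral>\<omega>. indicator B (W \<omega>) \<partial>density M (\<lambda>\<omega>. g \<omega> / m))"
    using g m by (subst integral_density) auto
  also have "\<dots> = (\<integral>x. indicator B x \<partial>distr (density M (\<lambda>\<omega>. g \<omega> / m)) borel W)"
    by (subst integral_distr) auto
  also have "\<dots> = (\<integral>\<omega>. indicator B (W \<omega>) \<partial>M)"
    unfolding law by (subst integral_distr) auto
  finally show ?thesis
    using m by (simp add: field_simps)
qed

lemma integral_iexp_uncorrelated:
  fixes W U :: "'a \<Rightarrow> real"
  assumes "prob_space M" and [measurable]: "W \<in> borel_measurable M" "U \<in> borel_measurable M"
    and "0 \<le> a" "0 \<le> b"
    and law: "\<And>t s. distr M borel (\<lambda>\<omega>. t * W \<omega> + s * U \<omega>) = normal_law (t\<^sup>2 * a + s\<^sup>2 * b)"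
  shows "(CLINT \<omega>|M. iexp (t * W \<omega> + s * U \<omega>)) =
    char (distr M borel W) t * complex_of_real (exp (- (b * s\<^sup>2) / 2))"
proof -
  interpret prob_space M by fact
  have joint: "(CLINT \<omega>|M. iexp (t * W \<omega> + s * U \<omega>)) = complex_of_real (exp (- (t\<^sup>2 * a + s\<^sup>2 * b) / 2))"
    for t s
  proof -
    have "(CLINT \<omega>|M. iexp (t * W \<omega> + s * U \<omega>)) = char (distr M borel (\<lambda>\<omega>. t * W \<omega> + s * U \<omega>)) 1"
      unfolding char_def by (subst integral_distr) auto
    then show ?thesis
      unfolding law using assms by (simp add: char_normal_law)
  qed
  have "char (distr M borel W) t = complex_of_real (exp (- (t\<^sup>2 * a) / 2))"
    using joint[of t 0] unfolding char_def by (subst integral_distr) auto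
  moreover have "exp (- (t\<^sup>2 * a + s\<^sup>2 * b) / 2) = exp (- (t\<^sup>2 * a) / 2) * exp (- (b * s\<^sup>2) / 2)"
    by (simp add: exp_add[symmetric] field_simps)
  ultimately show ?thesis
    using joint[of t s] by simp
qed

lemma cos_diff_mult_iexp:
  "complex_of_real (cos (s - \<theta>)) * iexp y = (iexp (- \<theta>) * iexp (y + s) + iexp \<theta> * iexp (y - s)) / 2"
  by (simp add: cos_of_real[symmetric] cos_exp_eq algebra_simps exp_add[symmetric] exp_diff[symmetric])

lemma integral_cos_weight_iexp_uncorrelated:
  fixes W U :: "'a \<Rightarrow> real"
  assumes "prob_space M" and [measurable]: "W \<in> borel_measurable M" "U \<in> borel_measurable M"
    and "0 \<le> a" "0 \<le> b"
    and law: "\<And>t s. distr M borel (\<lambda>\<omega>. t * W \<omega> + s * U \<omega>) = normal_law (t\<^sup>2 * a + s\<^sup>2 * b)"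
  shows "(CLINT \<omega>|M. complex_of_real (2 + cos (u * U \<omega> - \<theta>)) * iexp (t * W \<omega>)) =
    complex_of_real (2 + cos \<theta> * exp (- (b * u\<^sup>2) / 2)) * char (distr M borel W) t"
proof -
  interpret prob_space M by fact
  note joint = integral_iexp_uncorrelated[OF assms]
  have int: "integrable M (\<lambda>\<omega>. iexp (t * W \<omega> + s * U \<omega>))" for s
    by (rule integrable_iexp) auto
  have "(CLINT \<omega>|M. complex_of_real (2 + cos (u * U \<omega> - \<theta>)) * iexp (t * W \<omega>)) =
      (CLINT \<omega>|M. 2 * iexp (t * W \<omega> + 0 * U \<omega>) +
        (iexp (- \<theta>) * iexp (t * W \<omega> + u * U \<omega>) + iexp \<theta> * iexp (t * W \<omega> + (- u) * U \<omega>)) / 2)"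
    by (simp only: of_real_add of_real_numeral distrib_right cos_diff_mult_iexp) simp
  also have "\<dots> = 2 * (CLINT \<omega>|M. iexp (t * W \<omega> + 0 * U \<omega>)) +
      (iexp (- \<theta>) * (CLINT \<omega>|M. iexp (t * W \<omega> + u * U \<omega>)) +
        iexp \<theta> * (CLINT \<omega>|M. iexp (t * W \<omega> + (- u) * U \<omega>))) / 2"
    using int[of 0] int[of u] int[of "- u"] by simp
  also have "\<dots> = complex_of_real (2 + cos \<theta> * exp (- (b * u\<^sup>2) / 2)) * char (distr M borel W) t"
    unfolding joint by (simp add: cos_of_real[symmetric] cos_exp_eq algebra_simps)
  finally show ?thesis .
qed

lemma integral_cos_indicator_uncorrelated:
  fixes W U :: "'a \<Rightarrow> real"
  assumes "prob_space M" and [measurable]: "W \<in> borel_measurable M" "U \<in> borel_measurable M"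
    and "0 \<le> a" "0 \<le> b"
    and law: "\<And>t s. distr M borel (\<lambda>\<omega>. t * W \<omega> + s * U \<omega>) = normal_law (t\<^sup>2 * a + s\<^sup>2 * b)"
    and [measurable]: "B \<in> sets borel"
  shows "(\<integral>\<omega>. cos (u * U \<omega> - \<theta>) * indicator B (W \<omega>) \<partial>M) =
    cos \<theta> * exp (- (b * u\<^sup>2) / 2) * (\<integral>\<omega>. indicator B (W \<omega>) \<partial>M)"
proof -
  interpret prob_space M by fact
  define \<psi> where "\<psi> = exp (- (b * u\<^sup>2) / 2)"
  have weight: "1 \<le> 2 + cos x" "norm (2 + cos x) \<le> 3" for x :: real
    using cos_ge_minus_one[of x] cos_le_one[of x] unfolding real_norm_def abs_le_iff by linarith+
  have "\<bar>cos \<theta> * \<psi>\<bar> \<le> 1"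
    unfolding \<psi>_def using assms(5) by (auto simp: abs_mult intro!: mult_le_one)
  then have "0 < 2 + cos \<theta> * \<psi>"
    by (simp add: abs_le_iff)
  \<comment> \<open>The shifted weight 2 + cos (u U - \<theta>) is positive, so that the reweighting lemma applies.\<close>
  then have "(\<integral>\<omega>. (2 + cos (u * U \<omega> - \<theta>)) * indicator B (W \<omega>) \<partial>M) =
      (2 + cos \<theta> * \<psi>) * (\<integral>\<omega>. indicator B (W \<omega>) \<partial>M)"
    unfolding \<psi>_def using weight(1)
    by (intro integral_weight_indicator integral_cos_weight_iexp_uncorrelated[OF assms(1-6)] assms
        integrable_const_bound[where B=3] AE_I2 weight(2))
      (auto intro: order_trans[OF zero_le_one])
  moreover have "integrable M (\<lambda>\<omega>. cos (u * U \<omega> - \<theta>) * indicator B (W \<omega>))"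
    by (intro integrable_const_bound[where B=1]) (auto simp: indicator_def)
  moreover have "integrable M (\<lambda>\<omega>. indicator B (W \<omega>) :: real)"
    by (intro integrable_const_bound[where B=1]) auto
  ultimately show ?thesis
    unfolding \<psi>_def by (simp add: distrib_right)
qed

lemma integral_indicator_iexp_uncorrelated:
  fixes W U :: "'a \<Rightarrow> real"
  assumes "prob_space M" and [measurable]: "W \<in> borel_measurable M" "U \<in> borel_measurable M"
    and "0 \<le> a" "0 \<le> b"
    and law: "\<And>t s. distr M borel (\<lambda>\<omega>. t * W \<omega> + s * U \<omega>) = normal_law (t\<^sup>2 * a + s\<^sup>2 * b)"
    and [measurable]: "B \<in> sets borel"
  shows "(CLINT \<omega>|M. complex_of_real (indicator B (W \<omega>)) * iexp (u * U \<omega>)) =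
    complex_of_real ((\<integral>\<omega>. indicator B (W \<omega>) \<partial>M) * exp (- (b * u\<^sup>2) / 2))"
proof -
  interpret prob_space M by fact
  note cos_int = integral_cos_indicator_uncorrelated[OF assms, of u]
  have int: "integrable M (\<lambda>\<omega>. cos (u * U \<omega> - \<theta>) * indicator B (W \<omega>))" for \<theta>
    by (intro integrable_const_bound[where B=1]) (auto simp: indicator_def)
  have "(CLINT \<omega>|M. complex_of_real (indicator B (W \<omega>)) * iexp (u * U \<omega>)) =
      (CLINT \<omega>|M. complex_of_real (cos (u * U \<omega> - 0) * indicator B (W \<omega>)) +
        \<i> * complex_of_real (cos (u * U \<omega> - pi / 2) * indicator B (W \<omega>)))"
    by (intro Bochner_Integration.integral_cong)
       (auto simp: cos_diff complex_eq_iff Re_exp Im_exp)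
  also have "\<dots> = complex_of_real ((\<integral>\<omega>. indicator B (W \<omega>) \<partial>M) * exp (- (b * u\<^sup>2) / 2))"
    using int[of 0] int[of "pi / 2"] cos_int[of 0] cos_int[of "pi / 2"]
    by (simp add: mult_ac del: of_real_mult)
  finally show ?thesis .
qed

section \<open>Independence of the residuals\<close>

definition as_vector :: "nat \<Rightarrow> (nat \<Rightarrow> 'a \<Rightarrow> real) \<Rightarrow> 'a \<Rightarrow> nat \<Rightarrow> real" where
  "as_vector n Z \<omega> = (\<lambda>i\<in>{..<n}. Z i \<omega>)"

abbreviation vec_space :: "nat \<Rightarrow> (nat \<Rightarrow> real) measure" where
  "vec_space n \<equiv> PiM {..<n} (\<lambda>_. borel)"

lemma measurable_as_vector [measurable]:
  "(\<And>i. i < n \<Longrightarrow> Z i \<in> borel_measurable M) \<Longrightarrow> as_vector n Z \<in> measurable M (vec_space n)"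
  unfolding as_vector_def by (intro measurable_restrict) auto

lemma gaussian_vector_conditional:
  fixes W :: "'a \<Rightarrow> real"
  assumes G: "gaussian_vector M n V w" and [measurable]: "W \<in> borel_measurable M" and "0 \<le> a"
    and law: "\<And>t c. distr M borel (\<lambda>\<omega>. t * W \<omega> + lin_comb n c V \<omega>) = normal_law (t\<^sup>2 * a + w c)"
    and [measurable]: "B \<in> sets borel" and p: "0 < measure M (W -` B \<inter> space M)"
  shows "gaussian_vector (density M (\<lambda>\<omega>. indicator B (W \<omega>) / measure M (W -` B \<inter> space M))) n V w"
proof -
  note G' = gaussian_vectorD[OF G]
  interpret prob_space M by (fact G'(1))
  define p where "p = measure M (W -` B \<inter> space M)"
  have [measurable]: "V i \<in> borel_measurable M" if "i < n" for i
    using G'(2) that .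
  have P_B: "(\<integral>\<omega>. indicator B (W \<omega>) \<partial>M) = p"
    unfolding p_def by (subst integral_distr[symmetric, where N=borel]) (auto simp: measure_distr)
  have "prob_space (density M (\<lambda>\<omega>. indicator B (W \<omega>) / p))"
    using p P_B unfolding p_def[symmetric]
    by (intro prob_space_density_integral_eq_1 prob_space_axioms integrable_divide
        integrable_const_bound[where B=1]) auto
  moreover have "distr (density M (\<lambda>\<omega>. indicator B (W \<omega>) / p)) borel (lin_comb n c V) = normal_law (w c)"
    for c
  proof (rule Levy_uniqueness)
    show "real_distribution (distr (density M (\<lambda>\<omega>. indicator B (W \<omega>) / p)) borel (lin_comb n c V))"
      using \<open>prob_space (density M _)\<close> by (intro prob_space.real_distribution_distr) auto
    have law2: "distr M borel (\<lambda>\<omega>. t * W \<omega> + s * lin_comb n c V \<omega>) = normal_law (t\<^sup>2 * a + s\<^sup>2 * w c)"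
      for t s
      using law[of t "\<lambda>i. s * c i"] by (simp add: lin_comb_scale gaussian_vector_scale[OF G])
    show "char (distr (density M (\<lambda>\<omega>. indicator B (W \<omega>) / p)) borel (lin_comb n c V)) = char (normal_law (w c))"
    proof
      fix u
      have "char (distr (density M (\<lambda>\<omega>. indicator B (W \<omega>) / p)) borel (lin_comb n c V)) u =
          (CLINT \<omega>|M. complex_of_real (indicator B (W \<omega>)) * iexp (u * lin_comb n c V \<omega>)) / complex_of_real p"
        using p unfolding p_def[symmetric] by (subst char_distr_density) auto
      also have "\<dots> = complex_of_real (p * exp (- (w c * u\<^sup>2) / 2)) / complex_of_real p"
        by (subst integral_indicator_iexp_uncorrelated[OF G'(1) _ _ \<open>0 \<le> a\<close> G'(3) law2])
          (auto simp: P_B)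
      also have "\<dots> = complex_of_real (exp (- (w c * u\<^sup>2) / 2))"
        using p unfolding p_def[symmetric] by simp
      finally show "char (distr (density M (\<lambda>\<omega>. indicator B (W \<omega>) / p)) borel (lin_comb n c V)) u =
          char (normal_law (w c)) u"
        by (simp add: char_normal_law G'(3))
    qed
  qed (rule real_distribution_normal_law)
  ultimately show ?thesis
    using G'(2,3) unfolding gaussian_vector_def p_def by auto
qed

lemma gaussian_vector_indep_events_if_law_unique:
  fixes W :: "'a \<Rightarrow> real"
  assumes G: "gaussian_vector M n V w" and [measurable]: "W \<in> borel_measurable M" and "0 \<le> a"
    and law: "\<And>t c. distr M borel (\<lambda>\<omega>. t * W \<omega> + lin_comb n c V \<omega>) = normal_law (t\<^sup>2 * a + w c)"
    and unique: "\<And>M'. gaussian_vector M' n V w \<Longrightarrow>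
      distr M' (vec_space n) (as_vector n V) = distr M (vec_space n) (as_vector n V)"
    and A: "A \<in> sets (vec_space n)" and [measurable]: "B \<in> sets borel"
  shows "measure M (as_vector n V -` A \<inter> space M \<inter> (W -` B \<inter> space M)) =
    measure M (as_vector n V -` A \<inter> space M) * measure M (W -` B \<inter> space M)"
proof -
  note G' = gaussian_vectorD[OF G]
  interpret prob_space M by (fact G'(1))
  have [measurable]: "as_vector n V \<in> measurable M (vec_space n)"
    using G'(2) by (rule measurable_as_vector)
  define F where "F = as_vector n V -` A \<inter> space M"
  define E where "E = W -` B \<inter> space M"
  have [measurable]: "F \<in> events" "E \<in> events"
    unfolding F_def E_def using A by measurable
  show ?thesis
    unfolding F_def[symmetric] E_def[symmetric]
  proof (cases "prob E = 0")
    case True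
    have "prob (F \<inter> E) \<le> prob E"
      by (intro finite_measure_mono) auto
    then show "prob (F \<inter> E) = prob F * prob E"
      using True by (simp add: measure_le_0_iff)
  next
    case False
    then have p: "0 < prob E" by (simp add: zero_less_measure_iff)
    define Q where "Q = density M (\<lambda>\<omega>. indicator B (W \<omega>) / prob E)"
    \<comment> \<open>Under M conditioned on E, V is Gaussian with the same variances, hence has the same law.\<close>
    have "gaussian_vector Q n V w"
      unfolding Q_def E_def using p
      by (intro gaussian_vector_conditional[OF G _ \<open>0 \<le> a\<close> law]) (auto simp: E_def)
    then have "prob F = measure (distr Q (vec_space n) (as_vector n V)) A"
      using unique A by (simp add: measure_distr F_def)
    also have "\<dots> = (\<integral>\<omega>. indicator F \<omega> \<partial>Q)"
      using A by (subst measure_distr) (auto simp: Q_def F_def Int_assoc)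
    also have "\<dots> = (\<integral>\<omega>. indicator B (W \<omega>) / prob E * indicator F \<omega> \<partial>M)"
      unfolding Q_def by (subst integral_density) auto
    also have "\<dots> = (\<integral>\<omega>. indicator (F \<inter> E) \<omega> / prob E \<partial>M)"
      by (intro Bochner_Integration.integral_cong) (auto simp: E_def F_def indicator_def)
    also have "\<dots> = prob (F \<inter> E) / prob E"
      by (simp add: F_def Int_assoc)
    finally show "prob (F \<inter> E) = prob F * prob E"
      using p by (simp add: field_simps)
  qed
qed

lemma gaussian_vector_indep_if_law_unique:
  fixes W :: "'a \<Rightarrow> real"
  assumes G: "gaussian_vector M n V w" and [measurable]: "W \<in> borel_measurable M" and "0 \<le> a"
    and law: "\<And>t c. distr M borel (\<lambda>\<omega>. t * W \<omega> + lin_comb n c V \<omega>) = normal_law (t\<^sup>2 * a + w c)"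
    and unique: "\<And>M'. gaussian_vector M' n V w \<Longrightarrow>
      distr M' (vec_space n) (as_vector n V) = distr M (vec_space n) (as_vector n V)"
  shows "distr M (vec_space n \<Otimes>\<^sub>M borel) (\<lambda>\<omega>. (as_vector n V \<omega>, W \<omega>)) =
    distr M (vec_space n) (as_vector n V) \<Otimes>\<^sub>M distr M borel W"
proof (rule pair_measure_eqI[symmetric])
  note G' = gaussian_vectorD[OF G]
  interpret prob_space M by (fact G'(1))
  have [measurable]: "as_vector n V \<in> measurable M (vec_space n)"
    using G'(2) by (rule measurable_as_vector)
  fix A B assume "A \<in> sets (distr M (vec_space n) (as_vector n V))" "B \<in> sets (distr M borel W)"
  then have [measurable]: "A \<in> sets (vec_space n)" "B \<in> sets borel" by auto
  have "(\<lambda>\<omega>. (as_vector n V \<omega>, W \<omega>)) -` (A \<times> B) \<inter> space M =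
      (as_vector n V -` A \<inter> space M) \<inter> (W -` B \<inter> space M)"
    by auto
  then show "emeasure (distr M (vec_space n) (as_vector n V)) A * emeasure (distr M borel W) B =
      emeasure (distr M (vec_space n \<Otimes>\<^sub>M borel) (\<lambda>\<omega>. (as_vector n V \<omega>, W \<omega>))) (A \<times> B)"
    using gaussian_vector_indep_events_if_law_unique[OF assms]
    by (simp add: emeasure_distr emeasure_eq_measure ennreal_mult)
qed (use gaussian_vectorD(1,2)[OF G] in
      \<open>auto intro!: prob_space_imp_sigma_finite prob_space.prob_space_distr cong: sets_pair_measure_cong\<close>)

lemma distr_as_vector_0:
  assumes "prob_space M"
  shows "distr M (vec_space 0) (as_vector 0 Z) = return (vec_space 0) (\<lambda>_. undefined)"
proof -
  have "distr M (vec_space 0) (as_vector 0 Z) = distr M (vec_space 0) (\<lambda>_ _. undefined)"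
    by (intro distr_cong) (auto simp: as_vector_def)
  also have "\<dots> = return (vec_space 0) (\<lambda>_. undefined)"
    by (rule prob_space.distr_const[OF assms]) (simp add: space_PiM)
  finally show ?thesis .
qed

lemma distr_as_vector_Suc:
  assumes "\<And>i. i < Suc n \<Longrightarrow> Z i \<in> borel_measurable M"
  shows "distr M (vec_space (Suc n)) (as_vector (Suc n) Z) =
    distr (distr M (vec_space n \<Otimes>\<^sub>M borel) (\<lambda>\<omega>. (as_vector n (residual v n Z) \<omega>, Z n \<omega>)))
      (vec_space (Suc n)) (\<lambda>y. \<lambda>i\<in>{..<Suc n}. if i < n then fst y i + regression_coeff v n i * snd y else snd y)"
    (is "_ = distr (distr M _ ?pair) _ ?T")
proof -
  have [measurable]: "Z i \<in> borel_measurable M" "residual v n Z i \<in> borel_measurable M" if "i < n" for i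
    using assms that by (auto intro: residual_measurable[where n="Suc n"])
  have [measurable]: "Z n \<in> borel_measurable M"
    using assms by simp
  have [measurable]: "?T \<in> measurable (vec_space n \<Otimes>\<^sub>M borel) (vec_space (Suc n))"
  proof (intro measurable_restrict)
    fix i
    show "(\<lambda>y. if i < n then fst y i + regression_coeff v n i * snd y else snd y)
        \<in> borel_measurable (vec_space n \<Otimes>\<^sub>M borel)"
    proof (cases "i < n")
      case True
      have "(\<lambda>y. fst y i) \<in> borel_measurable (vec_space n \<Otimes>\<^sub>M borel)"
        using True by (intro measurable_compose[OF measurable_fst measurable_component_singleton]) auto
      then show ?thesis using True by simp
    qed simp
  qed
  have "as_vector (Suc n) Z \<omega> = ?T (?pair \<omega>)" for \<omega>
    by (auto simp: as_vector_def residual_def fun_eq_iff less_Suc_eq)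
  then show ?thesis
    by (subst distr_distr) (auto intro!: distr_cong)
qed

theorem gaussian_vector_law_unique:
  assumes "gaussian_vector M n Z v" "gaussian_vector M' n Z v"
  shows "distr M (vec_space n) (as_vector n Z) = distr M' (vec_space n) (as_vector n Z)"
  using assms
proof (induction n arbitrary: M M' Z v)
  case 0
  then show ?case
    by (metis distr_as_vector_0 gaussian_vectorD(1))
next
  case (Suc n)
  define V where "V = residual v n Z"
  define w where "w c = v (residual_coeffs (Suc n) v n (\<lambda>i. if i < n then c i else 0))" for c
  have GV: "gaussian_vector N n V w" if "gaussian_vector N (Suc n) Z v" for N
    unfolding V_def w_def
    by (rule gaussian_vector_restrict[OF gaussian_vector_residual(1)[OF that lessI] le_SucI[OF order_refl]])
  have pair: "distr N (vec_space n \<Otimes>\<^sub>M borel) (\<lambda>\<omega>. (as_vector n V \<omega>, Z n \<omega>)) =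
      distr N (vec_space n) (as_vector n V) \<Otimes>\<^sub>M normal_law (v (unit_coeff n))"
    if G: "gaussian_vector N (Suc n) Z v" for N
  proof -
    have "distr N borel (\<lambda>\<omega>. t * Z n \<omega> + lin_comb n c V \<omega>) = normal_law (t\<^sup>2 * v (unit_coeff n) + w c)"
      for t c
      using gaussian_vector_residual(2)[OF G, of n t "\<lambda>i. if i < n then c i else 0"]
      by (simp add: V_def w_def lin_comb_zero_extend)
    then show ?thesis
      using gaussian_vector_indep_if_law_unique[OF GV[OF G] _ gaussian_vectorD(3)[OF G]] Suc.IH[OF _ GV[OF G]]
        gaussian_vectorD(2)[OF G] gaussian_vector_component_law[OF G]
      by simp
  qed
  have law_Suc: "distr N (vec_space (Suc n)) (as_vector (Suc n) Z) =
      distr (distr N (vec_space n) (as_vector n V) \<Otimes>\<^sub>M normal_law (v (unit_coeff n))) (vec_space (Suc n))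
        (\<lambda>y. \<lambda>i\<in>{..<Suc n}. if i < n then fst y i + regression_coeff v n i * snd y else snd y)"
    if "gaussian_vector N (Suc n) Z v" for N
    unfolding V_def pair[OF that, unfolded V_def, symmetric]
    by (rule distr_as_vector_Suc[OF gaussian_vectorD(2)[OF that]])
  show ?case
    unfolding law_Suc[OF Suc.prems(1)] law_Suc[OF Suc.prems(2)]
      Suc.IH[OF GV[OF Suc.prems(1)] GV[OF Suc.prems(2)]] ..
qed

corollary gaussian_vector_residual_indep:
  assumes "gaussian_vector M n Z v" "j < n"
  shows "distr M (vec_space n \<Otimes>\<^sub>M borel) (\<lambda>\<omega>. (as_vector n (residual v j Z) \<omega>, Z j \<omega>)) =
    distr M (vec_space n) (as_vector n (residual v j Z)) \<Otimes>\<^sub>M distr M borel (Z j)"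
  by (rule gaussian_vector_indep_if_law_unique[OF gaussian_vector_residual(1)[OF assms] _
      gaussian_vectorD(3)[OF assms(1)] gaussian_vector_residual(2)[OF assms]])
    (use assms gaussian_vectorD(2)[OF assms(1)] gaussian_vector_residual(1)[OF assms] in
      \<open>auto intro: gaussian_vector_law_unique\<close>)

section \<open>The argmax event\<close>

lemma measurable_argmax_index [measurable]:
  assumes "\<And>i. i < L \<Longrightarrow> X i \<in> borel_measurable M"
  shows "argmax_index L X \<in> measurable M (count_space UNIV)"
  unfolding argmax_index_def[abs_def]
proof (rule measurable_Least)
  fix i
  show "(\<lambda>\<omega>. i < L \<and> (\<forall>k<L. X k \<omega> \<le> X i \<omega>)) \<in> measurable M (count_space UNIV)"
  proof (cases "i < L")
    case True
    have [measurable]: "X k \<in> borel_measurable M" if "k \<in> {..<L}" for k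
      using assms that by simp
    have [measurable]: "X i \<in> borel_measurable M"
      using assms True by simp
    have "Measurable.pred M (\<lambda>\<omega>. \<forall>k\<in>{..<L}. X k \<omega> \<le> X i \<omega>)"
      by measurable
    then show ?thesis
      using True by simp
  qed simp
qed

lemma argmax_index_eq_iff:
  fixes X :: "nat \<Rightarrow> 'a \<Rightarrow> real"
  assumes l: "l < L" and distinct: "\<And>k. k < L \<Longrightarrow> k \<noteq> l \<Longrightarrow> X k \<omega> \<noteq> X l \<omega>"
  shows "argmax_index L X \<omega> = l \<longleftrightarrow> (\<forall>k<L. X k \<omega> \<le> X l \<omega>)"
proof
  assume max: "\<forall>k<L. X k \<omega> \<le> X l \<omega>"
  show "argmax_index L X \<omega> = l"
    unfolding argmax_index_def
  proof (rule Least_equality)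
    show "l < L \<and> (\<forall>k<L. X k \<omega> \<le> X l \<omega>)"
      using l max by auto
    fix j assume "j < L \<and> (\<forall>k<L. X k \<omega> \<le> X j \<omega>)"
    then show "l \<le> j"
      using max l distinct by (metis order_antisym order_refl)
  qed
next
  assume "argmax_index L X \<omega> = l"
  have "Max ((\<lambda>k. X k \<omega>) ` {..<L}) \<in> (\<lambda>k. X k \<omega>) ` {..<L}"
    using l by (intro Max_in) auto
  then obtain j where j: "j < L" "X j \<omega> = Max ((\<lambda>k. X k \<omega>) ` {..<L})"
    by auto
  have "X k \<omega> \<le> X j \<omega>" if "k < L" for k
    using that j(2) Max_ge[of "(\<lambda>k. X k \<omega>) ` {..<L}" "X k \<omega>"] by simp
  then have "\<exists>j. j < L \<and> (\<forall>k<L. X k \<omega> \<le> X j \<omega>)"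
    using j(1) by blast
  then have "argmax_index L X \<omega> < L \<and> (\<forall>k<L. X k \<omega> \<le> X (argmax_index L X \<omega>) \<omega>)"
    unfolding argmax_index_def by (rule LeastI_ex)
  then show "\<forall>k<L. X k \<omega> \<le> X l \<omega>"
    using \<open>argmax_index L X \<omega> = l\<close> by simp
qed

lemma argmax_index_eq_iff_Max_le:
  fixes X :: "nat \<Rightarrow> 'a \<Rightarrow> real" and \<rho> :: "nat \<Rightarrow> real"
  assumes "l < L" "2 \<le> L"
    and \<rho>: "\<And>k. k < L \<Longrightarrow> k \<noteq> l \<Longrightarrow> \<rho> k < 1"
    and distinct: "\<And>k. k < L \<Longrightarrow> k \<noteq> l \<Longrightarrow> X k \<omega> \<noteq> X l \<omega>"
  shows "argmax_index L X \<omega> = l \<longleftrightarrow>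
    (MAX k \<in> {..<L} - {l}. (X k \<omega> - \<rho> k * X l \<omega>) / (1 - \<rho> k)) \<le> X l \<omega>"
proof -
  have "(if l = 0 then 1 else 0) \<in> {..<L} - {l}"
    using assms(1,2) by auto
  then have "{..<L} - {l} \<noteq> {}"
    by blast
  then have "(MAX k \<in> {..<L} - {l}. (X k \<omega> - \<rho> k * X l \<omega>) / (1 - \<rho> k)) \<le> X l \<omega> \<longleftrightarrow>
      (\<forall>k \<in> {..<L} - {l}. (X k \<omega> - \<rho> k * X l \<omega>) / (1 - \<rho> k) \<le> X l \<omega>)"
    by simp
  also have "\<dots> \<longleftrightarrow> (\<forall>k \<in> {..<L} - {l}. X k \<omega> \<le> X l \<omega>)"
    using \<rho> by (intro ball_cong refl) (simp add: pos_divide_le_eq algebra_simps)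
  also have "\<dots> \<longleftrightarrow> argmax_index L X \<omega> = l"
    using argmax_index_eq_iff[where X=X, OF assms(1) distinct] by auto
  finally show ?thesis ..
qed

lemma integral_indep_pair:
  fixes Y :: "'a \<Rightarrow> 'b" and W :: "'a \<Rightarrow> real" and f :: "'b \<times> real \<Rightarrow> real"
  assumes "prob_space M"
    and [measurable]: "Y \<in> measurable M N" "W \<in> borel_measurable M" "f \<in> borel_measurable (N \<Otimes>\<^sub>M borel)"
    and indep: "distr M (N \<Otimes>\<^sub>M borel) (\<lambda>\<omega>. (Y \<omega>, W \<omega>)) = distr M N Y \<Otimes>\<^sub>M distr M borel W"
    and int: "integrable M (\<lambda>\<omega>. f (Y \<omega>, W \<omega>))"
  shows "integrable (distr M N Y) (\<lambda>y. \<integral>x. f (y, x) \<partial>distr M borel W)"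
    and "(\<integral>\<omega>. f (Y \<omega>, W \<omega>) \<partial>M) = (\<integral>y. (\<integral>x. f (y, x) \<partial>distr M borel W) \<partial>distr M N Y)"
proof -
  interpret prob_space M by fact
  interpret pair_sigma_finite "distr M N Y" "distr M borel W"
    by (intro pair_sigma_finite.intro prob_space_imp_sigma_finite prob_space_distr) auto
  have "integrable (distr M (N \<Otimes>\<^sub>M borel) (\<lambda>\<omega>. (Y \<omega>, W \<omega>))) f"
    using int by (subst integrable_distr_eq) auto
  then have int_f: "integrable (distr M N Y \<Otimes>\<^sub>M distr M borel W) f"
    unfolding indep .
  then show "integrable (distr M N Y) (\<lambda>y. \<integral>x. f (y, x) \<partial>distr M borel W)"
    by (rule integrable_fst')
  have "(\<integral>\<omega>. f (Y \<omega>, W \<omega>) \<partial>M) = integral\<^sup>L (distr M (N \<Otimes>\<^sub>M borel) (\<lambda>\<omega>. (Y \<omega>, W \<omega>))) f"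
    by (subst integral_distr) auto
  also have "\<dots> = (\<integral>y. (\<integral>x. f (y, x) \<partial>distr M borel W) \<partial>distr M N Y)"
    unfolding indep by (rule integral_fst'[OF int_f, symmetric])
  finally show "(\<integral>\<omega>. f (Y \<omega>, W \<omega>) \<partial>M) = (\<integral>y. (\<integral>x. f (y, x) \<partial>distr M borel W) \<partial>distr M N Y)" .
qed

lemma integral_indep_std_normal_above_threshold_pos:
  fixes Y :: "'a \<Rightarrow> 'b" and W :: "'a \<Rightarrow> real" and h :: "'b \<Rightarrow> real"
  assumes "prob_space M"
    and [measurable]: "Y \<in> measurable M N" "W \<in> borel_measurable M" "h \<in> borel_measurable N"
    and indep: "distr M (N \<Otimes>\<^sub>M borel) (\<lambda>\<omega>. (Y \<omega>, W \<omega>)) = distr M N Y \<Otimes>\<^sub>M distr M borel W"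
    and std: "distr M borel W = std_normal_distribution"
  shows "0 < (\<integral>\<omega>. W \<omega> * indicator {\<omega>. h (Y \<omega>) \<le> W \<omega>} \<omega> \<partial>M)"
proof -
  interpret prob_space M by fact
  interpret Y: prob_space "distr M N Y"
    by (rule prob_space_distr) simp
  define F where "F p = snd p * indicator {p. h (fst p) \<le> snd p} p" for p :: "'b \<times> real"
  have F_measurable [measurable]: "F \<in> borel_measurable (N \<Otimes>\<^sub>M borel)"
    unfolding F_def by measurable
  have "integrable (distr M borel W) (\<lambda>x. x)"
    unfolding std using integrable_std_normal_distribution_moment[of 1] by simp
  then have "integrable M W"
    by (subst (asm) integrable_distr_eq) auto
  then have "integrable M (\<lambda>\<omega>. F (Y \<omega>, W \<omega>))"
    by (rule Bochner_Integration.integrable_bound) (auto simp: F_def indicator_def)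
  note fubini = integral_indep_pair[OF assms(1-3) F_measurable indep this, unfolded std]
  have "0 < (\<integral>x. F (y, x) \<partial>std_normal_distribution)" for y
  proof -
    have "(\<integral>x. F (y, x) \<partial>std_normal_distribution) = (\<integral>x. x * indicator {h y..} x \<partial>std_normal_distribution)"
      by (rule Bochner_Integration.integral_cong) (auto simp: F_def indicator_def)
    then show ?thesis
      using std_normal_truncated_mean_pos[of "h y"] by (simp only:)
  qed
  then have "(\<integral>y. 0 \<partial>distr M N Y) < (\<integral>y. (\<integral>x. F (y, x) \<partial>std_normal_distribution) \<partial>distr M N Y)"
    by (intro Y.integral_less_AE_space fubini(1)) (use Y.emeasure_space_1 in simp_all)
  also have "\<dots> = (\<integral>\<omega>. F (Y \<omega>, W \<omega>) \<partial>M)"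
    by (rule fubini(2)[symmetric])
  also have "\<dots> = (\<integral>\<omega>. W \<omega> * indicator {\<omega>. h (Y \<omega>) \<le> W \<omega>} \<omega> \<partial>M)"
    by (simp add: F_def indicator_def)
  finally show ?thesis
    by simp
qed

definition residual_threshold :: "((nat \<Rightarrow> real) \<Rightarrow> real) \<Rightarrow> nat \<Rightarrow> nat \<Rightarrow> (nat \<Rightarrow> real) \<Rightarrow> real" where
  "residual_threshold v L l y = (MAX k \<in> {..<L} - {l}. y k / (1 - covar v k l))"

lemma measurable_residual_threshold [measurable]:
  "residual_threshold v L l \<in> borel_measurable (vec_space L)"
  unfolding residual_threshold_def by measurable

lemma AE_argmax_index_eq_iff_residual_threshold:
  assumes G: "gaussian_vector M L X v" and l: "l < L" and "2 \<le> L"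
    and var: "\<And>k. k < L \<Longrightarrow> v (unit_coeff k) = 1"
    and covar: "\<And>k. k < L \<Longrightarrow> k \<noteq> l \<Longrightarrow> covar v k l < 1"
  shows "AE \<omega> in M. argmax_index L X \<omega> = l \<longleftrightarrow>
    residual_threshold v L l (as_vector L (residual v l X) \<omega>) \<le> X l \<omega>"
proof -
  have threshold: "residual_threshold v L l (as_vector L (residual v l X) \<omega>) =
      (MAX k \<in> {..<L} - {l}. (X k \<omega> - covar v k l * X l \<omega>) / (1 - covar v k l))" for \<omega>
    unfolding residual_threshold_def by (intro arg_cong[where f=Max] image_cong)
      (auto simp: as_vector_def residual_def regression_coeff_def var[OF l])
  have "AE \<omega> in M. \<forall>k \<in> {..<L} - {l}. X k \<omega> \<noteq> X l \<omega>"
    using covar l by (intro AE_finite_allI AE_gaussian_vector_components_neq[OF G]) (auto simp: var)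
  then show ?thesis
    by eventually_elim (simp add: argmax_index_eq_iff_Max_le[OF l assms(3) covar] threshold)
qed

theorem proposition6:
  fixes M :: "'a measure" and L :: nat and X :: "nat \<Rightarrow> 'a \<Rightarrow> real"
  assumes "prob_space M"
    and "L \<ge> 2"
    and "centered_gaussian_vector M L X"
    and "\<And>i. i < L \<Longrightarrow> (\<integral>\<omega>. (X i \<omega>)\<^sup>2 \<partial>M) = 1"
    and "\<And>i j. i < L \<Longrightarrow> j < L \<Longrightarrow> i \<noteq> j \<Longrightarrow> (\<integral>\<omega>. X i \<omega> * X j \<omega> \<partial>M) < 1"
  shows "\<forall>l<L. (\<integral>\<omega>. X l \<omega> * indicator {\<omega>. argmax_index L X \<omega> = l} \<omega> \<partial>M) > 0"
proof (intro allI impI)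
  fix l assume l: "l < L"
  define v where "v c = (\<integral>\<omega>. (lin_comb L c X \<omega>)\<^sup>2 \<partial>M)" for c
  have G: "gaussian_vector M L X v"
    unfolding v_def[abs_def] by (rule centered_gaussian_vector_imp_gaussian_vector[OF assms(1,3)])
  note X_measurable [measurable] = gaussian_vectorD(2)[OF G]
  have var: "v (unit_coeff k) = 1" if "k < L" for k
    using gaussian_vector_var[OF G that] assms(4)[OF that] by simp
  have covar: "covar v k l < 1" if "k < L" "k \<noteq> l" for k
    using gaussian_vector_covar(2)[OF G that(1) l] assms(5)[OF that(1) l that(2)] by simp
  define V where "V = as_vector L (residual v l X)"
  have [measurable]: "V \<in> measurable M (vec_space L)"
    unfolding V_def using l X_measurable by (intro measurable_as_vector residual_measurable) auto
  have "(\<integral>\<omega>. X l \<omega> * indicator {\<omega>. argmax_index L X \<omega> = l} \<omega> \<partial>M) =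
      (\<integral>\<omega>. X l \<omega> * indicator {\<omega>. residual_threshold v L l (V \<omega>) \<le> X l \<omega>} \<omega> \<partial>M)"
    using AE_argmax_index_eq_iff_residual_threshold[OF G l assms(2) var covar, folded V_def] l
    unfolding indicator_def mem_Collect_eq by (intro integral_cong_AE) auto
  also have "0 < \<dots>"
    using gaussian_vector_residual_indep[OF G l, folded V_def] gaussian_vector_component_law[OF G l] l
    by (intro integral_indep_std_normal_above_threshold_pos[OF assms(1), where N="vec_space L"])
      (simp_all add: var normal_law_1)
  finally show "0 < (\<integral>\<omega>. X l \<omega> * indicator {\<omega>. argmax_index L X \<omega> = l} \<omega> \<partial>M)" .
qed

end
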